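(* Let ${\bf m}=(m_1,\ldots,m_n)$ be a tuple of positive integers, let $G({\bf m})$ be the graph on $[n+1]$ whose edges are $m_i$ copies of $(i,n+1)$ for each $i=1,\ldots,n$, and let $a_1,\ldots,a_n\in\mathbb{Z}_{\ge0}$. Then the normalized volume of $\mathcal{F}_{G({\bf m})}({\bf a})$, ${\bf a}=(a_1,\ldots,a_n,-\sum a_i)$, is \[ {\rm vol}\,\mathcal{F}_{G({\bf m})}({\bf a})=\binom{\#E(G({\bf m}))-n}{m_1-1,\ldots,m_n-1}a_1^{m_1-1}\cdots a_n^{m_n-1}. \]
   Context: $\mathcal{F}_H({\bf a})$ is the set of $f\in\mathbb{R}_{\ge0}^{E(H)}$ with outflow minus inflow at each vertex $k\le n$ equal to $a_k$. The normalized volume of a polytope in dimension $d=\#E(G({\bf m}))-n$ is $d!$ times its $d$-dimensional volume relative to the lattice of integer points in its affine hull (so that unimodular simplices have normalized volume $1$). *)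

theory Defs
  imports "HOL-Analysis.Analysis"
begin

(* A directed multigraph is given by a finite edge set E together with tail/head maps. *)

definition netflow :: "'e set \<Rightarrow> ('e \<Rightarrow> nat) \<Rightarrow> ('e \<Rightarrow> nat) \<Rightarrow> ('e \<Rightarrow> real) \<Rightarrow> nat \<Rightarrow> real" where
  "netflow E t h f k = (\<Sum>e\<in>{e\<in>E. t e = k}. f e) - (\<Sum>e\<in>{e\<in>E. h e = k}. f e)"

definition flow_polytope :: "'e set \<Rightarrow> ('e \<Rightarrow> nat) \<Rightarrow> ('e \<Rightarrow> nat) \<Rightarrow> nat \<Rightarrow> (nat \<Rightarrow> real) \<Rightarrow> ('e \<Rightarrow> real) set" where
  "flow_polytope E t h n a =
     {f \<in> extensional E. (\<forall>e\<in>E. 0 \<le> f e) \<and> (\<forall>k\<in>{1..n}. netflow E t h f k = a k)}"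

definition flow_dir :: "'e set \<Rightarrow> ('e \<Rightarrow> nat) \<Rightarrow> ('e \<Rightarrow> nat) \<Rightarrow> nat \<Rightarrow> ('e \<Rightarrow> real) set" where
  "flow_dir E t h n = {f \<in> extensional E. \<forall>k\<in>{1..n}. netflow E t h f k = 0}"

definition mat_map :: "nat \<Rightarrow> (nat \<Rightarrow> 'e \<Rightarrow> real) \<Rightarrow> 'e set \<Rightarrow> ('e \<Rightarrow> real) \<Rightarrow> (nat \<Rightarrow> real)" where
  "mat_map d M E f = restrict (\<lambda>j. \<Sum>e\<in>E. M j e * f e) {..<d}"

definition lattice_chart :: "nat \<Rightarrow> (nat \<Rightarrow> 'e \<Rightarrow> real) \<Rightarrow> 'e set \<Rightarrow> ('e \<Rightarrow> real) set \<Rightarrow> bool" where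
  "lattice_chart d M E V \<longleftrightarrow>
     bij_betw (mat_map d M E) V (PiE {..<d} (\<lambda>_. UNIV)) \<and>
     mat_map d M E ` {f \<in> V. \<forall>e\<in>E. f e \<in> \<int>} = PiE {..<d} (\<lambda>_. \<int>)"

definition rel_norm_volume :: "nat \<Rightarrow> 'e set \<Rightarrow> ('e \<Rightarrow> real) set \<Rightarrow> ('e \<Rightarrow> real) set \<Rightarrow> real" where
  "rel_norm_volume d E V P =
     fact d * measure (PiM {..<d} (\<lambda>_. lborel)) (mat_map d (SOME M. lattice_chart d M E V) E ` P)"

(* G(m): edges (i,j), i in [n], j in [m_i], the j-th copy of the edge (i, n+1) *)
definition Gm_edges :: "nat \<Rightarrow> (nat \<Rightarrow> nat) \<Rightarrow> (nat \<times> nat) set" where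
  "Gm_edges n m = {(i, j). i \<in> {1..n} \<and> j \<in> {1..m i}}"

definition Gm_tail :: "nat \<times> nat \<Rightarrow> nat" where "Gm_tail e = fst e"
definition Gm_head :: "nat \<Rightarrow> nat \<times> nat \<Rightarrow> nat" where "Gm_head n e = Suc n"

definition multinomial :: "nat \<Rightarrow> (nat \<Rightarrow> nat) \<Rightarrow> real" where
  "multinomial n k = fact (\<Sum>i=1..n. k i) / (\<Prod>i=1..n. fact (k i))"

end

theory Submission
  imports Defs
begin

text \<open>Call the edges \<open>(i, j)\<close> with \<open>j \<ge> 2\<close> free. Conservation at \<open>i\<close> determines the flow on
  \<open>(i, 1)\<close> as \<open>a\<^sub>i\<close> minus the flows on the free edges leaving \<open>i\<close>, so the free flows are lattice
  coordinates on the polytope, in which it becomes the product over \<open>i\<close> of the standard simplices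
  \<open>{y \<ge> 0, \<Sum>y \<le> a\<^sub>i}\<close> of dimension \<open>m\<^sub>i - 1\<close> and volume \<open>a\<^sub>i ^ (m\<^sub>i - 1) / (m\<^sub>i - 1)!\<close>.
  Any other lattice chart differs from this one by a translation and a linear bijection \<open>T\<close> of
  \<open>\<real>\<^sup>d\<close> with \<open>T(\<int>\<^sup>d) = \<int>\<^sup>d\<close>. Such a \<open>T\<close> preserves Lebesgue measure: \<open>A \<mapsto> |T(A)|\<close> is translation
  invariant, hence determined by its value on the unit cube \<open>Q\<close>, and \<open>|T(Q)| = 1\<close> because integer
  translations rearrange the pieces \<open>T(Q) \<inter> (w + Q)\<close> into the pieces \<open>T(u + Q) \<inter> Q\<close> of \<open>Q\<close>.\<close>

section \<open>Lebesgue measure on \<open>\<real>\<^sup>d\<close> and translations\<close>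

abbreviation lborel_pi :: "nat \<Rightarrow> (nat \<Rightarrow> real) measure" where
  "lborel_pi d \<equiv> PiM {..<d} (\<lambda>_. lborel)"

lemma space_lborel_pi: "space (lborel_pi d) = PiE {..<d} (\<lambda>_. UNIV)"
  by (simp add: space_PiM)

definition shift :: "nat \<Rightarrow> (nat \<Rightarrow> real) \<Rightarrow> (nat \<Rightarrow> real) \<Rightarrow> (nat \<Rightarrow> real)" where
  "shift d v x = restrict (\<lambda>i. v i + x i) {..<d}"

lemma shift_measurable [measurable]: "shift d v \<in> lborel_pi d \<rightarrow>\<^sub>M lborel_pi d"
  unfolding shift_def by measurable

lemma shift_in_space: "shift d v x \<in> space (lborel_pi d)"
  by (simp add: shift_def space_lborel_pi)

lemma shift_uminus_shift: "x \<in> space (lborel_pi d) \<Longrightarrow> shift d (\<lambda>i. - v i) (shift d v x) = x"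
  by (auto simp: shift_def space_lborel_pi fun_eq_iff PiE_def extensional_def)

lemma shift_restrict: "shift d (restrict v {..<d}) = shift d v"
  by (auto simp: shift_def fun_eq_iff)

lemma inj_on_shift: "inj_on (shift d v) (space (lborel_pi d))"
  by (metis inj_on_inverseI shift_uminus_shift)

lemma shift_image_eq_vimage:
  assumes "A \<subseteq> space (lborel_pi d)"
  shows "shift d v ` A = shift d (\<lambda>i. - v i) -` A \<inter> space (lborel_pi d)"
proof (intro equalityI subsetI)
  fix y assume "y \<in> shift d v ` A"
  then obtain x where x: "x \<in> A" "y = shift d v x" by blast
  with assms have "x \<in> space (lborel_pi d)" by blast
  with x show "y \<in> shift d (\<lambda>i. - v i) -` A \<inter> space (lborel_pi d)"
    by (simp add: shift_uminus_shift shift_in_space)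
next
  fix y assume y: "y \<in> shift d (\<lambda>i. - v i) -` A \<inter> space (lborel_pi d)"
  then have "y = shift d v (shift d (\<lambda>i. - v i) y)"
    using shift_uminus_shift[of y d "\<lambda>i. - v i"] by simp
  with y show "y \<in> shift d v ` A" by blast
qed

lemma emeasure_lborel_vimage_plus:
  "A \<in> sets borel \<Longrightarrow> emeasure lborel ((+) (c::real) -` A) = emeasure lborel A"
proof -
  assume A: "A \<in> sets borel"
  have "emeasure (distr lborel borel ((+) c)) A = emeasure lborel A"
    by (simp add: lborel_distr_plus)
  then show ?thesis using A by (subst (asm) emeasure_distr) auto
qed

lemma distr_shift_lborel_pi: "distr (lborel_pi d) (lborel_pi d) (shift d v) = lborel_pi d"
proof -
  interpret product_sigma_finite "\<lambda>_. lborel :: real measure" ..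
  show ?thesis
  proof (rule PiM_eqI)
    fix A assume A: "\<And>i. i \<in> {..<d} \<Longrightarrow> A i \<in> sets (lborel :: real measure)"
    have "shift d v -` PiE {..<d} A \<inter> space (lborel_pi d) = PiE {..<d} (\<lambda>i. (+) (v i) -` A i)"
      by (auto simp: shift_def space_PiM PiE_def Pi_def extensional_def)
    moreover have ms: "(+) (v i) -` A i \<in> sets lborel" if "i \<in> {..<d}" for i
      using measurable_sets[of "(+) (v i)" borel borel "A i"] A[OF that] by simp
    ultimately have "emeasure (distr (lborel_pi d) (lborel_pi d) (shift d v)) (PiE {..<d} A)
        = emeasure (lborel_pi d) (PiE {..<d} (\<lambda>i. (+) (v i) -` A i))"
      using A by (subst emeasure_distr) auto
    also have "\<dots> = (\<Prod>i<d. emeasure lborel ((+) (v i) -` A i))"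
      using ms by (intro emeasure_PiM) auto
    also have "\<dots> = (\<Prod>i<d. emeasure lborel (A i))"
      using A by (intro prod.cong refl emeasure_lborel_vimage_plus) auto
    finally show "emeasure (distr (lborel_pi d) (lborel_pi d) (shift d v)) (PiE {..<d} A)
        = (\<Prod>i<d. emeasure lborel (A i))" .
  qed auto
qed

lemma sets_shift_image: "A \<in> sets (lborel_pi d) \<Longrightarrow> shift d v ` A \<in> sets (lborel_pi d)"
  using shift_image_eq_vimage[of A d v] sets.sets_into_space[of A "lborel_pi d"]
    measurable_sets[OF shift_measurable[of d "\<lambda>i. - v i"]] by simp

lemma emeasure_shift_image:
  assumes "A \<in> sets (lborel_pi d)"
  shows "emeasure (lborel_pi d) (shift d v ` A) = emeasure (lborel_pi d) A"
proof -
  have "emeasure (lborel_pi d) (shift d v ` A)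
      = emeasure (distr (lborel_pi d) (lborel_pi d) (shift d (\<lambda>i. - v i))) A"
    using assms shift_image_eq_vimage[of A d v] sets.sets_into_space[OF assms]
    by (subst emeasure_distr) auto
  then show ?thesis by (simp add: distr_shift_lborel_pi)
qed

section \<open>Translation invariant measures\<close>

definition dyadic_interval :: "nat \<Rightarrow> int \<Rightarrow> real set" where
  "dyadic_interval k j = {real_of_int j / 2^k ..< (real_of_int j + 1) / 2^k}"

lemma mem_dyadic_interval_iff: "x \<in> dyadic_interval k j \<longleftrightarrow> \<lfloor>x * 2^k\<rfloor> = j"
  by (simp add: dyadic_interval_def floor_eq_iff field_simps)

lemma floor_mult_power2_div:
  assumes "k \<le> K"
  shows "\<lfloor>(x::real) * 2^k\<rfloor> = \<lfloor>x * 2^K\<rfloor> div 2^(K-k)"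
proof -
  have "(2::real)^K = 2^k * 2^(K-k)" using assms by (simp add: power_add[symmetric])
  then have "x * 2^k = (x * 2^K) / real_of_int (2^(K-k))" by simp
  moreover have "\<lfloor>(x * 2^K) / real_of_int (2^(K-k))\<rfloor> = \<lfloor>x * 2^K\<rfloor> div 2^(K-k)"
    by (rule floor_divide_real_eq_div) simp
  ultimately show ?thesis by simp
qed

lemma mem_dyadic_interval_refine:
  assumes "k \<le> K"
  shows "x \<in> dyadic_interval k j \<longleftrightarrow>
    (\<exists>t\<in>{0..<2^(K-k)}. x \<in> dyadic_interval K (j * 2^(K-k) + t))"
proof -
  define p :: int where "p = 2^(K-k)"
  have "p > 0" by (simp add: p_def)
  have "x \<in> dyadic_interval k j \<longleftrightarrow> \<lfloor>x * 2^K\<rfloor> div p = j"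
    using floor_mult_power2_div[OF assms, of x] by (simp add: mem_dyadic_interval_iff p_def)
  also have "\<dots> \<longleftrightarrow> (\<exists>t\<in>{0..<p}. \<lfloor>x * 2^K\<rfloor> = j * p + t)"
    using \<open>p > 0\<close> by (auto intro!: bexI[of _ "\<lfloor>x * 2^K\<rfloor> mod p"] simp: mult.commute)
  finally show ?thesis by (simp add: mem_dyadic_interval_iff p_def)
qed

lemma disjoint_dyadic_interval: "j \<noteq> j' \<Longrightarrow> dyadic_interval K j \<inter> dyadic_interval K j' = {}"
  by (auto simp: mem_dyadic_interval_iff)

definition dyadic_intervals :: "real set set" where
  "dyadic_intervals = insert {} (range (\<lambda>(k, j). dyadic_interval k j))"

lemma dyadic_interval_Int_mem:
  "dyadic_interval k j \<inter> dyadic_interval k' j' \<in> dyadic_intervals"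
proof -
  have *: "dyadic_interval k j \<inter> dyadic_interval k' j' \<in> dyadic_intervals"
    if "k \<le> k'" for k j k' j'
  proof (cases "j' div 2^(k'-k) = j")
    case True
    then have "dyadic_interval k' j' \<subseteq> dyadic_interval k j"
      using floor_mult_power2_div[OF that] by (auto simp: mem_dyadic_interval_iff)
    then show ?thesis by (auto simp: dyadic_intervals_def Int_absorb1)
  next
    case False
    then have "dyadic_interval k j \<inter> dyadic_interval k' j' = {}"
      using floor_mult_power2_div[OF that] by (auto simp: mem_dyadic_interval_iff)
    then show ?thesis by (simp add: dyadic_intervals_def)
  qed
  show ?thesis
    using *[of k k' j j'] *[of k' k j' j] by (cases "k \<le> k'") (auto simp: Int_commute)
qed

lemma Int_dyadic_intervals:
  assumes "A \<in> dyadic_intervals" "B \<in> dyadic_intervals"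
  shows "A \<inter> B \<in> dyadic_intervals"
proof (cases "A = {} \<or> B = {}")
  case True
  then show ?thesis by (auto simp: dyadic_intervals_def)
next
  case False
  with assms obtain k j k' j' where "A = dyadic_interval k j" "B = dyadic_interval k' j'"
    by (auto simp: dyadic_intervals_def)
  then show ?thesis by (simp add: dyadic_interval_Int_mem)
qed

lemma sets_borel_eq_sigma_dyadic_intervals:
  "sets (borel :: real measure) = sigma_sets UNIV dyadic_intervals"
proof -
  interpret S: sigma_algebra "UNIV::real set" "sigma_sets UNIV dyadic_intervals"
    by (rule sigma_algebra_sigma_sets) simp
  have "borel = sigma UNIV (id ` dyadic_intervals)"
  proof (rule borel_eq_sigmaI1[OF borel_Iio])
    fix X :: "real set" assume "X \<in> range lessThan"
    then obtain a where a: "X = {..<a}" by auto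
    define C where "C = (\<lambda>(k, j). dyadic_interval k j) ` {(k, j). (real_of_int j + 1) / 2^k \<le> a}"
    have "countable C" unfolding C_def by (intro countable_image) auto
    moreover have "C \<subseteq> sigma_sets UNIV dyadic_intervals"
      unfolding C_def dyadic_intervals_def by (auto intro: sigma_sets.Basic)
    ultimately have "\<Union>C \<in> sigma_sets UNIV dyadic_intervals" by (rule S.countable_Union)
    moreover have "\<Union>C = {..<a}"
    proof (intro equalityI subsetI)
      fix x assume "x \<in> \<Union>C"
      then show "x \<in> {..<a}" by (auto simp: C_def dyadic_interval_def)
    next
      fix x assume "x \<in> {..<a}"
      then obtain k where k: "(1/2::real)^k < a - x"
        using real_arch_pow_inv[of "a - x" "1/2"] by auto
      define j where "j = \<lfloor>x * 2^k\<rfloor>"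
      have "real_of_int j \<le> x * 2^k" by (simp add: j_def)
      then have "(real_of_int j + 1) / 2^k \<le> x + 1/2^k" by (simp add: field_simps)
      also have "\<dots> \<le> a" using k by (simp add: power_divide)
      finally show "x \<in> \<Union>C"
        by (auto simp: C_def mem_dyadic_interval_iff j_def)
    qed
    ultimately show "X \<in> sets (sigma UNIV (id ` dyadic_intervals))"
      using a by (simp add: sets_measure_of)
  next
    fix I assume "I \<in> dyadic_intervals"
    then show "id I \<in> sets borel" by (auto simp: dyadic_intervals_def dyadic_interval_def)
  qed
  moreover have "sets (sigma UNIV dyadic_intervals) = sigma_sets UNIV dyadic_intervals"
    by (rule sets_measure_of) simp
  ultimately show ?thesis by simp
qed

definition dyadic_boxes :: "nat \<Rightarrow> (nat \<Rightarrow> real) set set" where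
  "dyadic_boxes d = {PiE {..<d} A | A. A \<in> {..<d} \<rightarrow> dyadic_intervals}"

lemma sets_lborel_pi_eq_sigma_dyadic_boxes:
  "sets (lborel_pi d) = sigma_sets (space (lborel_pi d)) (dyadic_boxes d)"
proof -
  have "sets (lborel_pi d) = sets (PiM {..<d} (\<lambda>_. sigma UNIV dyadic_intervals))"
    by (rule sets_PiM_cong) (auto simp: sets_borel_eq_sigma_dyadic_intervals sets_measure_of)
  also have "\<dots> = sets (sigma (PiE {..<d} (\<lambda>_. UNIV))
      {{f\<in>PiE {..<d} (\<lambda>_. UNIV). \<forall>i\<in>J. f i \<in> A i} | A J. J \<in> {{..<d}} \<and> A \<in> J \<rightarrow> dyadic_intervals})"
  proof (rule sets_PiM_sigma)
    show "\<exists>S\<subseteq>dyadic_intervals. countable S \<and> UNIV = \<Union>S"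
      by (intro exI[of _ "range (dyadic_interval 0)"])
        (auto simp: dyadic_intervals_def mem_dyadic_interval_iff)
  qed auto
  also have "{{f\<in>PiE {..<d} (\<lambda>_. UNIV). \<forall>i\<in>J. f i \<in> A i} | A J. J \<in> {{..<d}} \<and> A \<in> J \<rightarrow> dyadic_intervals}
      = dyadic_boxes d"
    unfolding dyadic_boxes_def by (auto simp: PiE_def Pi_def)
  finally show ?thesis
    by (subst (asm) sets_measure_of) (auto simp: dyadic_boxes_def space_lborel_pi PiE_def Pi_def)
qed

lemma Int_stable_dyadic_boxes: "Int_stable (dyadic_boxes d)"
proof (rule Int_stableI)
  fix X Y assume "X \<in> dyadic_boxes d" "Y \<in> dyadic_boxes d"
  then obtain A B where "X = PiE {..<d} A" "A \<in> {..<d} \<rightarrow> dyadic_intervals"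
    and "Y = PiE {..<d} B" "B \<in> {..<d} \<rightarrow> dyadic_intervals"
    by (auto simp: dyadic_boxes_def)
  then show "X \<inter> Y \<in> dyadic_boxes d"
    unfolding dyadic_boxes_def
    by (intro CollectI exI[of _ "\<lambda>i. A i \<inter> B i"]) (auto simp: PiE_Int Pi_iff Int_dyadic_intervals)
qed

lemma dyadic_box_in_sets: "PiE {..<d} (\<lambda>i. dyadic_interval (k i) (z i)) \<in> sets (lborel_pi d)"
  by (intro sets_PiM_I_finite) (auto simp: dyadic_interval_def)

definition dyadic_cube :: "nat \<Rightarrow> nat \<Rightarrow> (nat \<Rightarrow> int) \<Rightarrow> (nat \<Rightarrow> real) set" where
  "dyadic_cube d K z = PiE {..<d} (\<lambda>i. dyadic_interval K (z i))"

lemma dyadic_cube_in_sets: "dyadic_cube d K z \<in> sets (lborel_pi d)"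
  unfolding dyadic_cube_def by (rule dyadic_box_in_sets)

lemma dyadic_cube_eq_shift:
  "dyadic_cube d K z = shift d (\<lambda>i. real_of_int (z i) / 2^K) ` dyadic_cube d K (\<lambda>_. 0)"
proof (intro equalityI subsetI)
  fix x assume x: "x \<in> dyadic_cube d K z"
  define v where "v = (\<lambda>i. real_of_int (z i) / 2^K)"
  define y where "y = restrict (\<lambda>i. x i - v i) {..<d}"
  have "y \<in> dyadic_cube d K (\<lambda>_. 0)" using x
    by (auto simp: y_def v_def dyadic_cube_def dyadic_interval_def PiE_def Pi_def
        diff_divide_distrib add_divide_distrib)
  moreover have "shift d v y = x" using x
    by (auto simp: shift_def y_def dyadic_cube_def fun_eq_iff PiE_def extensional_def)
  ultimately show "x \<in> shift d (\<lambda>i. real_of_int (z i) / 2^K) ` dyadic_cube d K (\<lambda>_. 0)"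
    unfolding v_def by blast
next
  fix x assume "x \<in> shift d (\<lambda>i. real_of_int (z i) / 2^K) ` dyadic_cube d K (\<lambda>_. 0)"
  then show "x \<in> dyadic_cube d K z"
    by (auto simp: shift_def dyadic_cube_def dyadic_interval_def PiE_def Pi_def add_divide_distrib)
qed

lemma dyadic_box_eq_UN_dyadic_cubes:
  assumes "\<And>i. i < d \<Longrightarrow> k i \<le> K"
  shows "PiE {..<d} (\<lambda>i. dyadic_interval (k i) (j i)) =
    (\<Union>t\<in>PiE {..<d} (\<lambda>i. {0..<2^(K - k i)}). dyadic_cube d K (\<lambda>i. j i * 2^(K - k i) + t i))"
proof (intro equalityI subsetI)
  fix x assume x: "x \<in> PiE {..<d} (\<lambda>i. dyadic_interval (k i) (j i))"
  have "\<forall>i\<in>{..<d}. \<exists>t\<in>{0..<2^(K - k i)}. x i \<in> dyadic_interval K (j i * 2^(K - k i) + t)"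
  proof
    fix i assume "i \<in> {..<d}"
    with x have "x i \<in> dyadic_interval (k i) (j i)" by auto
    with \<open>i \<in> {..<d}\<close> show "\<exists>t\<in>{0..<2^(K - k i)}. x i \<in> dyadic_interval K (j i * 2^(K - k i) + t)"
      using mem_dyadic_interval_refine[OF assms] by auto
  qed
  then obtain t where t: "\<And>i. i \<in> {..<d} \<Longrightarrow>
      t i \<in> {0..<2^(K - k i)} \<and> x i \<in> dyadic_interval K (j i * 2^(K - k i) + t i)"
    by metis
  show "x \<in> (\<Union>t\<in>PiE {..<d} (\<lambda>i. {0..<2^(K - k i)}). dyadic_cube d K (\<lambda>i. j i * 2^(K - k i) + t i))"
    using t x by (intro UN_I[of "restrict t {..<d}"]) (auto simp: dyadic_cube_def PiE_def)
next
  fix x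
  assume "x \<in> (\<Union>t\<in>PiE {..<d} (\<lambda>i. {0..<2^(K - k i)}). dyadic_cube d K (\<lambda>i. j i * 2^(K - k i) + t i))"
  then obtain t where t: "t \<in> PiE {..<d} (\<lambda>i. {0..<2^(K - k i)})"
    and x: "x \<in> dyadic_cube d K (\<lambda>i. j i * 2^(K - k i) + t i)"
    by auto
  have "x i \<in> dyadic_interval (k i) (j i)" if "i < d" for i
  proof -
    have "x i \<in> dyadic_interval K (j i * 2 ^ (K - k i) + t i)" "t i \<in> {0..<2^(K - k i)}"
      using PiE_mem[OF x[unfolded dyadic_cube_def]] PiE_mem[OF t] that by auto
    then show ?thesis using mem_dyadic_interval_refine[OF assms[OF that]] by blast
  qed
  with x show "x \<in> PiE {..<d} (\<lambda>i. dyadic_interval (k i) (j i))"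
    by (auto simp: dyadic_cube_def PiE_def)
qed

lemma disjoint_family_on_dyadic_cubes:
  "disjoint_family_on (\<lambda>t. dyadic_cube d K (\<lambda>i. j i * 2^(K - k i) + t i))
     (PiE {..<d} (\<lambda>i. {0..<2^(K - k i)}))"
  unfolding disjoint_family_on_def
proof (intro ballI impI)
  fix t t' assume "t \<in> PiE {..<d} (\<lambda>i. {0..<(2::int)^(K - k i)})"
    "t' \<in> PiE {..<d} (\<lambda>i. {0..<(2::int)^(K - k i)})" "t \<noteq> t'"
  then obtain i where "i < d" "t i \<noteq> t' i"
    by (metis PiE_ext lessThan_iff)
  then show "dyadic_cube d K (\<lambda>i. j i * 2^(K - k i) + t i) \<inter>
      dyadic_cube d K (\<lambda>i. j i * 2^(K - k i) + t' i) = {}"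
    using disjoint_dyadic_interval[of "j i * 2^(K - k i) + t i" "j i * 2^(K - k i) + t' i" K]
    by (auto simp: dyadic_cube_def PiE_def Pi_def)
qed

definition translation_invariant :: "nat \<Rightarrow> (nat \<Rightarrow> real) measure \<Rightarrow> bool" where
  "translation_invariant d M \<longleftrightarrow>
     (\<forall>A\<in>sets (lborel_pi d). \<forall>v. emeasure M (shift d v ` A) = emeasure M A)"

lemma translation_invariant_lborel_pi: "translation_invariant d (lborel_pi d)"
  by (simp add: translation_invariant_def emeasure_shift_image)

lemma emeasure_dyadic_box:
  assumes M: "sets M = sets (lborel_pi d)" "translation_invariant d M"
    and k: "\<And>i. i < d \<Longrightarrow> k i \<le> K"
  shows "emeasure M (PiE {..<d} (\<lambda>i. dyadic_interval (k i) (j i))) =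
     of_nat (\<Prod>i<d. 2^(K - k i)) * emeasure M (dyadic_cube d K (\<lambda>_. 0))"
proof -
  let ?I = "PiE {..<d} (\<lambda>i. {0..<(2::int)^(K - k i)})"
  let ?F = "\<lambda>t. dyadic_cube d K (\<lambda>i. j i * 2^(K - k i) + t i)"
  have "emeasure M (PiE {..<d} (\<lambda>i. dyadic_interval (k i) (j i))) = emeasure M (\<Union>t\<in>?I. ?F t)"
    using dyadic_box_eq_UN_dyadic_cubes[OF k] by simp
  also have "\<dots> = (\<Sum>t\<in>?I. emeasure M (?F t))"
    using disjoint_family_on_dyadic_cubes M(1) dyadic_cube_in_sets
    by (intro sum_emeasure[symmetric]) (auto intro: finite_PiE)
  also have "\<dots> = (\<Sum>t\<in>?I. emeasure M (dyadic_cube d K (\<lambda>_. 0)))"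
    using M dyadic_cube_in_sets dyadic_cube_eq_shift
    by (intro sum.cong refl) (metis translation_invariant_def)
  also have "\<dots> = of_nat (\<Prod>i<d. 2^(K - k i)) * emeasure M (dyadic_cube d K (\<lambda>_. 0))"
    by (simp add: card_PiE nat_power_eq)
  finally show ?thesis .
qed

definition unit_cube :: "nat \<Rightarrow> (nat \<Rightarrow> real) set" where
  "unit_cube d = dyadic_cube d 0 (\<lambda>_. 0)"

lemma unit_cube_in_sets: "unit_cube d \<in> sets (lborel_pi d)"
  unfolding unit_cube_def by (rule dyadic_cube_in_sets)

lemma emeasure_unit_cube: "emeasure (lborel_pi d) (unit_cube d) = 1"
proof -
  interpret product_sigma_finite "\<lambda>_. lborel :: real measure" ..
  show ?thesis
    by (simp add: unit_cube_def dyadic_cube_def emeasure_PiM dyadic_interval_def)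
qed

lemma emeasure_dyadic_cube_eq_lborel_pi:
  assumes "sets M = sets (lborel_pi d)" "translation_invariant d M"
    and "emeasure M (unit_cube d) = 1"
  shows "emeasure M (dyadic_cube d K (\<lambda>_. 0)) = emeasure (lborel_pi d) (dyadic_cube d K (\<lambda>_. 0))"
proof -
  define N :: nat where "N = (\<Prod>i<d. 2^K)"
  have split: "emeasure N' (unit_cube d) = of_nat N * emeasure N' (dyadic_cube d K (\<lambda>_. 0))"
    if "sets N' = sets (lborel_pi d)" "translation_invariant d N'" for N'
    using emeasure_dyadic_box[OF that, of "\<lambda>_. 0" K "\<lambda>_. 0"]
    by (simp add: unit_cube_def dyadic_cube_def N_def)
  have "of_nat N * emeasure M (dyadic_cube d K (\<lambda>_. 0)) =
      of_nat N * emeasure (lborel_pi d) (dyadic_cube d K (\<lambda>_. 0))"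
    using split[OF assms(1,2)] split[OF refl translation_invariant_lborel_pi] assms(3)
    by (simp add: emeasure_unit_cube)
  moreover have "(of_nat N :: ennreal) \<noteq> 0" by (simp add: N_def)
  ultimately show ?thesis by (simp add: ennreal_mult_cancel_left)
qed

lemma emeasure_dyadic_box_eq_lborel_pi:
  assumes M: "sets M = sets (lborel_pi d)" "translation_invariant d M"
    and unit: "emeasure M (unit_cube d) = 1"
    and box: "X \<in> dyadic_boxes d"
  shows "emeasure M X = emeasure (lborel_pi d) X"
proof -
  from box obtain A where X: "X = PiE {..<d} A" and A: "A \<in> {..<d} \<rightarrow> dyadic_intervals"
    by (auto simp: dyadic_boxes_def)
  show ?thesis
  proof (cases "\<exists>i<d. A i = {}")
    case True
    then show ?thesis by (auto simp: X PiE_eq_empty_iff)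
  next
    case False
    with A have "\<forall>i\<in>{..<d}. \<exists>k j. A i = dyadic_interval k j"
      by (force simp: dyadic_intervals_def)
    then obtain k j where kj: "\<And>i. i \<in> {..<d} \<Longrightarrow> A i = dyadic_interval (k i) (j i)"
      by metis
    define K where "K = (\<Sum>i<d. k i)"
    have kK: "k i \<le> K" if "i < d" for i
      unfolding K_def using that by (intro member_le_sum) auto
    have "X = PiE {..<d} (\<lambda>i. dyadic_interval (k i) (j i))"
      using kj by (auto simp: X intro!: PiE_cong)
    then show ?thesis
      using emeasure_dyadic_box[OF M kK] emeasure_dyadic_box[OF refl translation_invariant_lborel_pi kK]
        emeasure_dyadic_cube_eq_lborel_pi[OF M unit] by simp
  qed
qed

lemma UN_dyadic_cubes_0:
  "(\<Union>z\<in>PiE {..<d} (\<lambda>_. UNIV). dyadic_cube d 0 z) = space (lborel_pi d)"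
proof (intro equalityI subsetI)
  fix x assume "x \<in> (\<Union>z\<in>PiE {..<d} (\<lambda>_. UNIV). dyadic_cube d 0 z)"
  then show "x \<in> space (lborel_pi d)" by (auto simp: dyadic_cube_def space_lborel_pi)
next
  fix x assume "x \<in> space (lborel_pi d)"
  then have "x \<in> dyadic_cube d 0 (restrict (\<lambda>i. \<lfloor>x i\<rfloor>) {..<d})"
    by (auto simp: dyadic_cube_def space_lborel_pi mem_dyadic_interval_iff PiE_def)
  moreover have "restrict (\<lambda>i. \<lfloor>x i\<rfloor>) {..<d} \<in> PiE {..<d} (\<lambda>_. UNIV)"
    by (subst restrict_PiE_iff) simp
  ultimately show "x \<in> (\<Union>z\<in>PiE {..<d} (\<lambda>_. UNIV). dyadic_cube d 0 z)"
    by (rule UN_I[rotated])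
qed

lemma translation_invariant_eq_lborel_pi:
  assumes M: "sets M = sets (lborel_pi d)" "translation_invariant d M"
    and unit: "emeasure M (unit_cube d) = 1"
  shows "M = lborel_pi d"
proof (rule measure_eqI_generator_eq_countable[OF Int_stable_dyadic_boxes])
  show "dyadic_boxes d \<subseteq> Pow (space (lborel_pi d))"
    by (auto simp: dyadic_boxes_def space_lborel_pi PiE_def Pi_def)
  show "sets M = sigma_sets (space (lborel_pi d)) (dyadic_boxes d)"
    using M(1) sets_lborel_pi_eq_sigma_dyadic_boxes by simp
  show "sets (lborel_pi d) = sigma_sets (space (lborel_pi d)) (dyadic_boxes d)"
    by (rule sets_lborel_pi_eq_sigma_dyadic_boxes)
  show "emeasure M X = emeasure (lborel_pi d) X" if "X \<in> dyadic_boxes d" for X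
    using emeasure_dyadic_box_eq_lborel_pi[OF M unit that] .
next
  let ?A = "(\<lambda>z. dyadic_cube d 0 z) ` PiE {..<d} (\<lambda>_. UNIV)"
  show "?A \<subseteq> dyadic_boxes d" by (auto simp: dyadic_boxes_def dyadic_cube_def dyadic_intervals_def)
  show "countable ?A" by (intro countable_image countable_PiE) auto
  show "\<Union>?A = space (lborel_pi d)" by (rule UN_dyadic_cubes_0)
  fix C assume "C \<in> ?A"
  then obtain z where "C = dyadic_cube d 0 z" by auto
  then have "emeasure M C = emeasure M (unit_cube d)"
    using M(2) dyadic_cube_in_sets dyadic_cube_eq_shift[of d 0 z]
    by (simp add: translation_invariant_def unit_cube_def)
  with unit show "emeasure M C \<noteq> \<infinity>" by simp
qed

section \<open>Lattice preserving linear maps preserve volume\<close>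

definition lin_map :: "nat \<Rightarrow> (nat \<Rightarrow> nat \<Rightarrow> real) \<Rightarrow> (nat \<Rightarrow> real) \<Rightarrow> (nat \<Rightarrow> real)" where
  "lin_map d B x = restrict (\<lambda>j. \<Sum>i<d. B j i * x i) {..<d}"

definition int_points :: "nat \<Rightarrow> (nat \<Rightarrow> real) set" where
  "int_points d = PiE {..<d} (\<lambda>_. \<int>)"

lemma lin_map_measurable [measurable]: "lin_map d B \<in> lborel_pi d \<rightarrow>\<^sub>M lborel_pi d"
  unfolding lin_map_def by measurable

lemma lin_map_in_space: "lin_map d B x \<in> space (lborel_pi d)"
  by (simp add: lin_map_def space_lborel_pi)

lemma lin_map_shift: "lin_map d B (shift d v x) = shift d (lin_map d B v) (lin_map d B x)"
  by (auto simp: lin_map_def shift_def fun_eq_iff sum.distrib distrib_left)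

lemma lin_map_restrict: "lin_map d B (restrict x {..<d}) = lin_map d B x"
  unfolding lin_map_def by (intro restrict_ext sum.cong) auto

lemma lin_map_lin_map:
  "lin_map d B (lin_map d C y) = lin_map d (\<lambda>k i. \<Sum>j<d. B k j * C j i) y"
proof -
  have "(\<Sum>j<d. B k j * lin_map d C y j) = (\<Sum>i<d. (\<Sum>j<d. B k j * C j i) * y i)" for k
  proof -
    have "(\<Sum>j<d. B k j * lin_map d C y j) = (\<Sum>j<d. \<Sum>i<d. B k j * C j i * y i)"
      by (intro sum.cong) (auto simp: lin_map_def sum_distrib_left mult.assoc)
    also have "\<dots> = (\<Sum>i<d. \<Sum>j<d. B k j * C j i * y i)"
      by (rule sum.swap)
    also have "\<dots> = (\<Sum>i<d. (\<Sum>j<d. B k j * C j i) * y i)"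
      by (simp add: sum_distrib_right)
    finally show ?thesis .
  qed
  then show ?thesis
    unfolding lin_map_def[of d B] by (simp add: lin_map_def[of d "\<lambda>k i. \<Sum>j<d. B k j * C j i"])
qed

lemma lin_map_cong:
  "(\<And>k i. k < d \<Longrightarrow> i < d \<Longrightarrow> B k i = B' k i) \<Longrightarrow> lin_map d B = lin_map d B'"
  unfolding lin_map_def by (intro ext restrict_ext sum.cong) auto

lemma lin_map_identity: "y \<in> space (lborel_pi d) \<Longrightarrow> lin_map d (\<lambda>k i. of_bool (k = i)) y = y"
proof -
  assume y: "y \<in> space (lborel_pi d)"
  have "(\<Sum>i<d. of_bool (k = i) * y i) = (\<Sum>i<d. if k = i then y i else 0)" for k
    by (intro sum.cong) auto
  then have "(\<Sum>i<d. of_bool (k = i) * y i) = y k" if "k < d" for k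
    using that by simp
  with y show ?thesis
    by (auto simp: lin_map_def space_lborel_pi fun_eq_iff PiE_def extensional_def)
qed

lemma lin_map_inverse:
  assumes bij: "bij_betw (lin_map d B) (space (lborel_pi d)) (space (lborel_pi d))"
  obtains C where "\<And>y. y \<in> space (lborel_pi d) \<Longrightarrow> lin_map d B (lin_map d C y) = y"
    and "\<And>x. x \<in> space (lborel_pi d) \<Longrightarrow> lin_map d C (lin_map d B x) = x"
proof -
  let ?T = "lin_map d B"
  let ?\<Omega> = "space (lborel_pi d)"
  define g where "g = the_inv_into ?\<Omega> ?T"
  define e :: "nat \<Rightarrow> nat \<Rightarrow> real" where "e i = restrict (\<lambda>k. of_bool (k = i)) {..<d}" for i
  define C where "C j i = g (e i) j" for j i
  have e: "e i \<in> ?\<Omega>" for i by (simp add: e_def space_lborel_pi)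
  then have Tg: "?T (g (e i)) = e i" for i
    using bij unfolding g_def by (auto simp: bij_betw_def f_the_inv_into_f)
  have "(\<Sum>j<d. B k j * C j i) = of_bool (k = i)" if "k < d" "i < d" for k i
    using that arg_cong[OF Tg[of i], of "\<lambda>x. x k"] by (simp add: lin_map_def C_def e_def)
  then have right: "?T (lin_map d C y) = y" if "y \<in> ?\<Omega>" for y
    using that by (simp add: lin_map_lin_map lin_map_identity cong: lin_map_cong)
  have "lin_map d C (?T x) = x" if "x \<in> ?\<Omega>" for x
  proof -
    have "?T (lin_map d C (?T x)) = ?T x" using right lin_map_in_space by blast
    then show ?thesis using bij that lin_map_in_space[of d C] by (auto simp: bij_betw_def inj_on_def)
  qed
  with right that show ?thesis by blast
qed

lemma int_points_subset_space: "int_points d \<subseteq> space (lborel_pi d)"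
  by (auto simp: int_points_def space_lborel_pi)

lemma countable_int_points: "countable (int_points d)"
  unfolding int_points_def by (intro countable_PiE) (auto simp: Ints_def)

lemma mem_dyadic_cube_0_iff:
  "x \<in> dyadic_cube d 0 z \<longleftrightarrow> x \<in> space (lborel_pi d) \<and> (\<forall>i<d. \<lfloor>x i\<rfloor> = z i)"
  by (auto simp: dyadic_cube_def space_lborel_pi mem_dyadic_interval_iff PiE_def)

lemma shift_unit_cube:
  assumes "w \<in> int_points d"
  shows "shift d w ` unit_cube d = dyadic_cube d 0 (\<lambda>i. \<lfloor>w i\<rfloor>)"
proof -
  have "shift d w = shift d (\<lambda>i. real_of_int \<lfloor>w i\<rfloor> / 2^0)"
    using assms by (auto simp: shift_def int_points_def fun_eq_iff PiE_def Pi_def)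
  then show ?thesis by (simp add: dyadic_cube_eq_shift[of d 0 "\<lambda>i. \<lfloor>w i\<rfloor>"] unit_cube_def)
qed

lemma disjoint_family_on_shift_unit_cube:
  "disjoint_family_on (\<lambda>w. shift d w ` unit_cube d) (int_points d)"
  unfolding disjoint_family_on_def
proof (intro ballI impI)
  fix w w' assume w: "w \<in> int_points d" "w' \<in> int_points d" and "w \<noteq> w'"
  then obtain i where i: "i < d" "w i \<noteq> w' i"
    by (auto simp: int_points_def PiE_def extensional_def fun_eq_iff) (metis not_less)
  with w have "\<lfloor>w i\<rfloor> \<noteq> \<lfloor>w' i\<rfloor>"
    by (auto simp: int_points_def PiE_def Pi_def elim!: Ints_cases)
  with i show "shift d w ` unit_cube d \<inter> shift d w' ` unit_cube d = {}"
    by (auto simp: shift_unit_cube[OF w(1)] shift_unit_cube[OF w(2)] mem_dyadic_cube_0_iff)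
qed

lemma UN_shift_unit_cube: "(\<Union>w\<in>int_points d. shift d w ` unit_cube d) = space (lborel_pi d)"
proof (intro equalityI subsetI)
  fix x assume "x \<in> (\<Union>w\<in>int_points d. shift d w ` unit_cube d)"
  then show "x \<in> space (lborel_pi d)" using shift_in_space by auto
next
  fix x assume x: "x \<in> space (lborel_pi d)"
  define w where "w = restrict (\<lambda>i. real_of_int \<lfloor>x i\<rfloor>) {..<d}"
  have w: "w \<in> int_points d" by (simp add: w_def int_points_def)
  have "x \<in> shift d w ` unit_cube d"
    unfolding shift_unit_cube[OF w] using x by (simp add: mem_dyadic_cube_0_iff w_def)
  with w show "x \<in> (\<Union>w\<in>int_points d. shift d w ` unit_cube d)" by blast
qed

locale unimodular_map =
  fixes d :: nat and B C :: "nat \<Rightarrow> nat \<Rightarrow> real"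
  assumes right_inverse: "y \<in> space (lborel_pi d) \<Longrightarrow> lin_map d B (lin_map d C y) = y"
    and left_inverse: "x \<in> space (lborel_pi d) \<Longrightarrow> lin_map d C (lin_map d B x) = x"
    and image_int_points: "lin_map d B ` int_points d = int_points d"
begin

abbreviation T where "T \<equiv> lin_map d B"
abbreviation cell where "cell w \<equiv> shift d w ` unit_cube d"

lemma image_eq_vimage:
  assumes "X \<subseteq> space (lborel_pi d)"
  shows "T ` X = lin_map d C -` X \<inter> space (lborel_pi d)"
proof (intro equalityI subsetI)
  fix y assume "y \<in> T ` X"
  then show "y \<in> lin_map d C -` X \<inter> space (lborel_pi d)"
    using assms left_inverse lin_map_in_space by auto
next
  fix y assume y: "y \<in> lin_map d C -` X \<inter> space (lborel_pi d)"
  then have "y = T (lin_map d C y)" by (simp add: right_inverse)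
  with y show "y \<in> T ` X" by blast
qed

lemma image_in_sets: "X \<in> sets (lborel_pi d) \<Longrightarrow> T ` X \<in> sets (lborel_pi d)"
  using image_eq_vimage[OF sets.sets_into_space] measurable_sets[OF lin_map_measurable] by simp

lemma inj_on_T: "inj_on T (space (lborel_pi d))"
  by (metis inj_on_inverseI left_inverse)

lemma image_space: "T ` space (lborel_pi d) = space (lborel_pi d)"
proof
  show "space (lborel_pi d) \<subseteq> T ` space (lborel_pi d)"
    using right_inverse lin_map_in_space by (metis image_eqI subsetI)
qed (use lin_map_in_space in auto)

definition lattice_perm :: "(nat \<Rightarrow> real) \<Rightarrow> (nat \<Rightarrow> real)" where
  "lattice_perm w = lin_map d C (\<lambda>i. - w i)"

lemma lattice_perm_eq: "lattice_perm w = lin_map d C (restrict (\<lambda>i. - w i) {..<d})"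
  by (simp add: lattice_perm_def lin_map_restrict)

lemma T_lattice_perm: "T (lattice_perm w) = restrict (\<lambda>i. - w i) {..<d}"
  by (simp add: lattice_perm_eq right_inverse space_lborel_pi)

lemma bij_betw_lattice_perm: "bij_betw lattice_perm (int_points d) (int_points d)"
proof -
  let ?neg = "\<lambda>w. restrict (\<lambda>i. - w i) {..<d}"
  have neg_neg: "?neg (?neg w) = w" if "w \<in> space (lborel_pi d)" for w
    using that by (auto simp: space_lborel_pi fun_eq_iff PiE_def extensional_def)
  have neg_int: "?neg w \<in> int_points d" if "w \<in> int_points d" for w
    using that by (simp add: int_points_def PiE_iff Ints_minus)
  note in_space = int_points_subset_space[THEN subsetD]
  have C_int: "lin_map d C u \<in> int_points d" if "u \<in> int_points d" for u
  proof -
    from that image_int_points obtain x where x: "x \<in> int_points d" "u = T x"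
      by (metis imageE)
    then show ?thesis using left_inverse[OF in_space[OF x(1)]] by simp
  qed
  show ?thesis
  proof (rule bij_betw_byWitness[where f'="\<lambda>u. ?neg (T u)"])
    show "\<forall>w\<in>int_points d. ?neg (T (lattice_perm w)) = w"
      unfolding T_lattice_perm using neg_neg in_space by blast
    show "\<forall>u\<in>int_points d. lattice_perm (?neg (T u)) = u"
    proof
      fix u assume u: "u \<in> int_points d"
      have "lattice_perm (?neg (T u)) = lin_map d C (T u)"
        unfolding lattice_perm_eq by (subst neg_neg[OF lin_map_in_space]) (rule refl)
      with left_inverse[OF in_space[OF u]] show "lattice_perm (?neg (T u)) = u" by simp
    qed
    show "lattice_perm ` int_points d \<subseteq> int_points d"
      using C_int neg_int by (auto simp only: lattice_perm_eq)
    show "(\<lambda>u. ?neg (T u)) ` int_points d \<subseteq> int_points d"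
      using image_int_points neg_int by auto
  qed
qed

text \<open>Translating by the lattice point \<open>-w\<close> moves the piece \<open>T(Q) \<inter> (w + Q)\<close> of the image of the
  unit cube \<open>Q\<close> onto the piece \<open>T(w' + Q) \<inter> Q\<close> of \<open>Q\<close>, where \<open>T(w') = -w\<close>.\<close>
lemma emeasure_image_unit_cube_Int_cell:
  assumes "w \<in> int_points d"
  shows "emeasure (lborel_pi d) (T ` unit_cube d \<inter> cell w)
    = emeasure (lborel_pi d) (T ` cell (lattice_perm w) \<inter> unit_cube d)"
proof -
  let ?v = "\<lambda>i. - w i"
  have sets: "T ` unit_cube d \<inter> cell w \<in> sets (lborel_pi d)"
    using image_in_sets[OF unit_cube_in_sets] sets_shift_image[OF unit_cube_in_sets] by blast
  have space: "T ` unit_cube d \<subseteq> space (lborel_pi d)" "cell w \<subseteq> space (lborel_pi d)"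
    using lin_map_in_space shift_in_space by auto
  have "shift d ?v ` cell w = (\<lambda>x. x) ` unit_cube d"
    unfolding image_image using sets.sets_into_space[OF unit_cube_in_sets]
    by (intro image_cong refl shift_uminus_shift) blast
  moreover have "shift d ?v ` T ` unit_cube d = T ` cell (lattice_perm w)"
    by (simp add: image_image lin_map_shift T_lattice_perm shift_restrict)
  ultimately have "shift d ?v ` (T ` unit_cube d \<inter> cell w) = T ` cell (lattice_perm w) \<inter> unit_cube d"
    by (simp add: inj_on_image_Int[OF inj_on_shift space])
  then show ?thesis using emeasure_shift_image[OF sets, of ?v] by simp
qed

lemma UN_image_cell_Int_unit_cube:
  "(\<Union>u\<in>int_points d. T ` cell u \<inter> unit_cube d) = unit_cube d"
proof -
  have "(\<Union>u\<in>int_points d. T ` cell u) = T ` (\<Union>u\<in>int_points d. cell u)"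
    by (rule image_UN[symmetric])
  also have "\<dots> = space (lborel_pi d)"
    by (simp only: UN_shift_unit_cube image_space)
  finally have "(\<Union>u\<in>int_points d. T ` cell u) \<inter> unit_cube d = unit_cube d"
    using sets.sets_into_space[OF unit_cube_in_sets] by (simp add: Int_absorb1)
  then show ?thesis by (simp only: UN_extend_simps(4))
qed

lemma emeasure_image_unit_cube: "emeasure (lborel_pi d) (T ` unit_cube d) = 1"
proof -
  let ?\<mu> = "emeasure (lborel_pi d)"
  have cell_sets: "cell w \<in> sets (lborel_pi d)" for w
    by (rule sets_shift_image[OF unit_cube_in_sets])
  have cell_space: "cell w \<subseteq> space (lborel_pi d)" for w
    using shift_in_space by blast
  have "T ` unit_cube d = T ` unit_cube d \<inter> (\<Union>w\<in>int_points d. cell w)"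
    by (simp add: UN_shift_unit_cube Int_absorb2 image_subset_iff lin_map_in_space)
  then have "?\<mu> (T ` unit_cube d) = ?\<mu> (\<Union>w\<in>int_points d. T ` unit_cube d \<inter> cell w)"
    by (simp only: Int_UN_distrib)
  also have "\<dots> = (\<integral>\<^sup>+w. ?\<mu> (T ` unit_cube d \<inter> cell w) \<partial>count_space (int_points d))"
  proof (rule emeasure_UN_countable)
    show "T ` unit_cube d \<inter> cell w \<in> sets (lborel_pi d)" for w
      using image_in_sets[OF unit_cube_in_sets] cell_sets by blast
    show "disjoint_family_on (\<lambda>w. T ` unit_cube d \<inter> cell w) (int_points d)"
      using disjoint_family_on_shift_unit_cube[of d] unfolding disjoint_family_on_def by blast
  qed (rule countable_int_points)
  also have "\<dots> = (\<integral>\<^sup>+w. ?\<mu> (T ` cell (lattice_perm w) \<inter> unit_cube d) \<partial>count_space (int_points d))"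
    by (intro nn_integral_cong) (simp add: emeasure_image_unit_cube_Int_cell)
  also have "\<dots> = (\<integral>\<^sup>+u. ?\<mu> (T ` cell u \<inter> unit_cube d) \<partial>count_space (int_points d))"
    by (rule nn_integral_bij_count_space[OF bij_betw_lattice_perm,
          where f="\<lambda>u. ?\<mu> (T ` cell u \<inter> unit_cube d)"])
  also have "\<dots> = ?\<mu> (\<Union>u\<in>int_points d. T ` cell u \<inter> unit_cube d)"
  proof (rule emeasure_UN_countable[symmetric])
    show "T ` cell u \<inter> unit_cube d \<in> sets (lborel_pi d)" for u
      using image_in_sets[OF cell_sets] unit_cube_in_sets by blast
    show "disjoint_family_on (\<lambda>u. T ` cell u \<inter> unit_cube d) (int_points d)"
      using disjoint_family_on_shift_unit_cube[of d] inj_on_T cell_space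
      unfolding disjoint_family_on_def inj_on_def by blast
  qed (rule countable_int_points)
  also have "\<dots> = 1"
    by (simp only: UN_image_cell_Int_unit_cube emeasure_unit_cube)
  finally show ?thesis .
qed

lemma emeasure_image:
  assumes "A \<in> sets (lborel_pi d)"
  shows "emeasure (lborel_pi d) (T ` A) = emeasure (lborel_pi d) A"
proof -
  define N where "N = distr (lborel_pi d) (lborel_pi d) (lin_map d C)"
  have emeasure_N: "emeasure N X = emeasure (lborel_pi d) (T ` X)" if "X \<in> sets (lborel_pi d)" for X
    unfolding N_def using that image_eq_vimage[OF sets.sets_into_space[OF that]]
    by (subst emeasure_distr) auto
  have "translation_invariant d N"
    unfolding translation_invariant_def
  proof (intro ballI allI)
    fix X v assume X: "X \<in> sets (lborel_pi d)"
    have "T ` shift d v ` X = shift d (T v) ` T ` X"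
      by (simp add: image_image lin_map_shift)
    then show "emeasure N (shift d v ` X) = emeasure N X"
      using emeasure_N[OF X] emeasure_N[OF sets_shift_image[OF X]]
        emeasure_shift_image[OF image_in_sets[OF X]] by simp
  qed
  moreover have "emeasure N (unit_cube d) = 1"
    using emeasure_N[OF unit_cube_in_sets] emeasure_image_unit_cube by simp
  ultimately have "N = lborel_pi d"
    by (intro translation_invariant_eq_lborel_pi) (simp_all add: N_def)
  then show ?thesis using emeasure_N[OF assms] by simp
qed

end

lemma emeasure_unimodular_image:
  assumes "bij_betw (lin_map d B) (space (lborel_pi d)) (space (lborel_pi d))"
    and "lin_map d B ` int_points d = int_points d"
    and "A \<in> sets (lborel_pi d)"
  shows "lin_map d B ` A \<in> sets (lborel_pi d)"
    and "emeasure (lborel_pi d) (lin_map d B ` A) = emeasure (lborel_pi d) A"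
proof -
  obtain C where C1: "\<And>y. y \<in> space (lborel_pi d) \<Longrightarrow> lin_map d B (lin_map d C y) = y"
    and C2: "\<And>x. x \<in> space (lborel_pi d) \<Longrightarrow> lin_map d C (lin_map d B x) = x"
    using lin_map_inverse[OF assms(1)] by blast
  interpret unimodular_map d B C
    by (rule unimodular_map.intro[OF C1 C2 assms(2)])
  show "lin_map d B ` A \<in> sets (lborel_pi d)" by (rule image_in_sets[OF assms(3)])
  show "emeasure (lborel_pi d) (lin_map d B ` A) = emeasure (lborel_pi d) A"
    by (rule emeasure_image[OF assms(3)])
qed

section \<open>Products of simplices\<close>

lemma merge_vimage_restrict:
  assumes IJ: "I \<inter> J = {}" and A: "A \<subseteq> space (PiM I M)" and B: "B \<subseteq> space (PiM J M)"
  shows "merge I J -` {x \<in> space (PiM (I \<union> J) M). restrict x I \<in> A \<and> restrict x J \<in> B}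
      \<inter> space (PiM I M \<Otimes>\<^sub>M PiM J M) = A \<times> B"
proof (intro equalityI subsetI)
  fix z
  assume z: "z \<in> merge I J -` {x \<in> space (PiM (I \<union> J) M). restrict x I \<in> A \<and> restrict x J \<in> B}
      \<inter> space (PiM I M \<Otimes>\<^sub>M PiM J M)"
  obtain x y where xy: "z = (x, y)" by (cases z)
  with z have "x \<in> space (PiM I M)" "y \<in> space (PiM J M)"
    by (auto simp: space_pair_measure)
  then have "restrict x I = x" "restrict y J = y"
    by (simp_all add: space_PiM PiE_restrict)
  with z xy IJ show "z \<in> A \<times> B" by auto
next
  fix z assume z: "z \<in> A \<times> B"
  obtain x y where xy: "z = (x, y)" by (cases z)
  with z A B have x: "x \<in> space (PiM I M)" and y: "y \<in> space (PiM J M)"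
    by auto
  then have "restrict x I = x" "restrict y J = y"
    by (simp_all add: space_PiM PiE_restrict)
  moreover have "merge I J (x, y) \<in> space (PiM (I \<union> J) M)"
    using measurable_space[OF measurable_merge, of "(x, y)" I M J] x y
    by (simp add: space_pair_measure)
  ultimately show "z \<in> merge I J -` {x \<in> space (PiM (I \<union> J) M). restrict x I \<in> A \<and> restrict x J \<in> B}
      \<inter> space (PiM I M \<Otimes>\<^sub>M PiM J M)"
    using z xy x y IJ by (simp add: space_pair_measure)
qed

lemma (in product_sigma_finite) emeasure_PiM_restrict_Un:
  assumes IJ: "I \<inter> J = {}" and fin: "finite I" "finite J"
    and A: "A \<in> sets (PiM I M)" and B: "B \<in> sets (PiM J M)"
  shows "emeasure (PiM (I \<union> J) M)
      {x \<in> space (PiM (I \<union> J) M). restrict x I \<in> A \<and> restrict x J \<in> B}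
    = emeasure (PiM I M) A * emeasure (PiM J M) B"
proof -
  interpret I: finite_product_sigma_finite M I by standard fact
  interpret J: finite_product_sigma_finite M J by standard fact
  interpret P: pair_sigma_finite "PiM I M" "PiM J M" ..
  let ?X = "{x \<in> space (PiM (I \<union> J) M). restrict x I \<in> A \<and> restrict x J \<in> B}"
  have "?X = (\<lambda>x. restrict x I) -` A \<inter> space (PiM (I \<union> J) M) \<inter>
      ((\<lambda>x. restrict x J) -` B \<inter> space (PiM (I \<union> J) M))"
    by auto
  also have "\<dots> \<in> sets (PiM (I \<union> J) M)"
    using measurable_sets[OF measurable_restrict_subset[of I "I \<union> J"] A]
      measurable_sets[OF measurable_restrict_subset[of J "I \<union> J"] B] by auto
  finally have X: "?X \<in> sets (PiM (I \<union> J) M)" .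
  have "merge I J -` ?X \<inter> space (PiM I M \<Otimes>\<^sub>M PiM J M) = A \<times> B"
    using IJ sets.sets_into_space[OF A] sets.sets_into_space[OF B] by (rule merge_vimage_restrict)
  moreover have "emeasure (PiM (I \<union> J) M) ?X =
      emeasure (PiM I M \<Otimes>\<^sub>M PiM J M) (merge I J -` ?X \<inter> space (PiM I M \<Otimes>\<^sub>M PiM J M))"
    using X by (subst distr_merge[OF IJ fin, symmetric], subst emeasure_distr) auto
  ultimately have "emeasure (PiM (I \<union> J) M) ?X = emeasure (PiM I M \<Otimes>\<^sub>M PiM J M) (A \<times> B)"
    by simp
  also have "\<dots> = emeasure (PiM I M) A * emeasure (PiM J M) B"
    using A B by (rule J.emeasure_pair_measure_Times)
  finally show ?thesis .
qed

lemma borel_measurable_sum_coordinates: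
  "S \<subseteq> I \<Longrightarrow> (\<lambda>x. \<Sum>l\<in>S. x l) \<in> borel_measurable (PiM I (\<lambda>_. lborel :: real measure))"
  by (intro borel_measurable_sum measurable_component_singleton) auto

definition simplex_product :: "'i set \<Rightarrow> ('i \<Rightarrow> 'l set) \<Rightarrow> ('i \<Rightarrow> real) \<Rightarrow> ('l \<Rightarrow> real) set" where
  "simplex_product I D t = {x. \<forall>i\<in>I. (\<forall>l\<in>D i. 0 \<le> x l) \<and> (\<Sum>l\<in>D i. x l) \<le> t i}"

lemma simplex_product_in_sets:
  assumes "finite I" "\<And>i. i \<in> I \<Longrightarrow> finite (D i)" "\<And>i. i \<in> I \<Longrightarrow> D i \<subseteq> L"
  shows "simplex_product I D t \<inter> space (PiM L (\<lambda>_. lborel)) \<in> sets (PiM L (\<lambda>_. lborel))"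
proof -
  have [measurable]: "(\<lambda>x. \<Sum>l\<in>D i. x l) \<in> borel_measurable (PiM L (\<lambda>_. lborel :: real measure))"
    if "i \<in> I" for i
    using assms(3)[OF that] by (rule borel_measurable_sum_coordinates)
  have [simp]: "l \<in> L" if "i \<in> I" "l \<in> D i" for i l
    using assms(3) that by blast
  have "simplex_product I D t \<inter> space (PiM L (\<lambda>_. lborel)) =
      {x \<in> space (PiM L (\<lambda>_. lborel)). \<forall>i\<in>I. (\<forall>l\<in>D i. 0 \<le> x l) \<and> (\<Sum>l\<in>D i. x l) \<le> t i}"
    by (auto simp: simplex_product_def)
  also have "\<dots> \<in> sets (PiM L (\<lambda>_. lborel))"
    using assms(1,2) by measurable
  finally show ?thesis .
qed

lemma simplex_product_insert:
  "simplex_product (insert i I) D t = simplex_product {i} D t \<inter> simplex_product I D t"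
  by (auto simp: simplex_product_def)

lemma restrict_mem_simplex_product:
  assumes "\<And>i. i \<in> I \<Longrightarrow> D i \<subseteq> L"
  shows "restrict x L \<in> simplex_product I D t \<longleftrightarrow> x \<in> simplex_product I D t"
proof -
  have "(\<Sum>l\<in>D i. restrict x L l) = (\<Sum>l\<in>D i. x l)" "\<forall>l\<in>D i. restrict x L l = x l"
    if "i \<in> I" for i
    using assms[OF that] by (auto intro!: sum.cong)
  then show ?thesis by (auto simp: simplex_product_def simp del: restrict_apply)
qed

lemma simplex_product_insert_eq_restrict:
  "simplex_product (insert i I) D t \<inter> space (PiM (\<Union>(D ` I) \<union> D i) (\<lambda>_. lborel)) =
    {x \<in> space (PiM (\<Union>(D ` I) \<union> D i) (\<lambda>_. lborel)).
      restrict x (\<Union>(D ` I)) \<in> simplex_product I D t \<inter> space (PiM (\<Union>(D ` I)) (\<lambda>_. lborel)) \<and>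
      restrict x (D i) \<in> simplex_product {i} D t \<inter> space (PiM (D i) (\<lambda>_. lborel))}"
proof -
  have "restrict x (\<Union>(D ` I)) \<in> simplex_product I D t \<inter> space (PiM (\<Union>(D ` I)) (\<lambda>_. lborel))
      \<longleftrightarrow> x \<in> simplex_product I D t" for x
    using restrict_mem_simplex_product[of I D "\<Union>(D ` I)" x t, OF UN_upper] by (simp add: space_PiM)
  moreover have "restrict x (D i) \<in> simplex_product {i} D t \<inter> space (PiM (D i) (\<lambda>_. lborel))
      \<longleftrightarrow> x \<in> simplex_product {i} D t" for x
    using restrict_mem_simplex_product[of "{i}" D "D i" x t] by (simp add: space_PiM)
  ultimately show ?thesis
    unfolding simplex_product_insert[of i I] by blast
qed

lemma emeasure_simplex_product:
  assumes "finite I" "disjoint_family_on D I"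
    and "\<And>i. i \<in> I \<Longrightarrow> finite (D i)" "\<And>i. i \<in> I \<Longrightarrow> 0 \<le> t i"
  shows "emeasure (PiM (\<Union>(D ` I)) (\<lambda>_. lborel))
      (simplex_product I D t \<inter> space (PiM (\<Union>(D ` I)) (\<lambda>_. lborel)))
    = ennreal (\<Prod>i\<in>I. t i ^ card (D i) / fact (card (D i)))"
  using assms
proof (induction I rule: finite_induct)
  case empty
  then show ?case by (simp add: simplex_product_def PiM_empty)
next
  case (insert i I)
  interpret product_sigma_finite "\<lambda>_. lborel :: real measure" ..
  let ?L = "\<Union>(D ` I)"
  let ?S = "\<lambda>J L. simplex_product J D t \<inter> space (PiM L (\<lambda>_. lborel))"
  have disj: "?L \<inter> D i = {}"
    using insert.prems(1) insert.hyps(2) by (fastforce simp: disjoint_family_on_def)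
  have fin: "finite ?L" "finite (D i)"
    using insert.prems(2) insert.hyps(1) by (blast intro: finite_UN_I)+
  have "emeasure (PiM (?L \<union> D i) (\<lambda>_. lborel)) (?S (insert i I) (?L \<union> D i)) =
      emeasure (PiM ?L (\<lambda>_. lborel)) (?S I ?L) * emeasure (PiM (D i) (\<lambda>_. lborel)) (?S {i} (D i))"
    unfolding simplex_product_insert_eq_restrict
    using simplex_product_in_sets[of I D ?L t] simplex_product_in_sets[of "{i}" D "D i" t] insert
    by (intro emeasure_PiM_restrict_Un disj fin insert.hyps) auto
  also have "emeasure (PiM ?L (\<lambda>_. lborel)) (?S I ?L) =
      ennreal (\<Prod>i\<in>I. t i ^ card (D i) / fact (card (D i)))"
    using insert by (auto intro: disjoint_family_on_mono)
  also have "emeasure (PiM (D i) (\<lambda>_. lborel)) (?S {i} (D i)) = t i ^ card (D i) / fact (card (D i))"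
    using emeasure_std_simplex_aux[OF fin(2), of "t i"] insert.prems(3)
    by (simp add: simplex_product_def Collect_conj_eq Int_assoc)
  finally show ?case
    using insert.prems(3) insert.hyps
    by (simp add: Un_commute[of "D i"] ennreal_mult'[symmetric] prod_nonneg mult.commute)
qed

section \<open>Coordinates on the flow polytope of \<open>G(m)\<close>\<close>

lemma mat_map_restrict_add:
  "mat_map d M E (restrict (\<lambda>e. f e + g e) E) = shift d (mat_map d M E g) (mat_map d M E f)"
  by (auto simp: mat_map_def shift_def fun_eq_iff distrib_left sum.distrib add.commute)

definition Gm_free_edges :: "nat \<Rightarrow> (nat \<Rightarrow> nat) \<Rightarrow> (nat \<times> nat) set" where
  "Gm_free_edges n m = Sigma {1..n} (\<lambda>i. {2..m i})"

lemma Gm_edges_eq_Sigma: "Gm_edges n m = Sigma {1..n} (\<lambda>i. {1..m i})"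
  by (auto simp: Gm_edges_def)

lemma Gm_free_edges_subset: "Gm_free_edges n m \<subseteq> Gm_edges n m"
  by (auto simp: Gm_free_edges_def Gm_edges_def)

lemma finite_Gm_edges: "finite (Gm_edges n m)"
  by (simp add: Gm_edges_eq_Sigma)

lemma finite_Gm_free_edges: "finite (Gm_free_edges n m)"
  by (simp add: Gm_free_edges_def)

lemma card_Gm_free_edges: "card (Gm_free_edges n m) = (\<Sum>i=1..n. m i - 1)"
  by (simp add: Gm_free_edges_def card_SigmaI)

lemma card_Gm_edges_minus:
  assumes "\<forall>i\<in>{1..n}. 0 < m i"
  shows "card (Gm_edges n m) - n = card (Gm_free_edges n m)"
proof -
  have "(\<Sum>i=1..n. m i) = (\<Sum>i=1..n. (m i - 1) + 1)"
    using assms by (intro sum.cong) auto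
  also have "\<dots> = card (Gm_free_edges n m) + n"
    by (simp only: sum.distrib) (simp add: card_Gm_free_edges)
  finally show ?thesis by (simp add: Gm_edges_eq_Sigma card_SigmaI)
qed

lemma netflow_Gm:
  assumes "k \<in> {1..n}"
  shows "netflow (Gm_edges n m) Gm_tail (Gm_head n) f k = (\<Sum>j=1..m k. f (k, j))"
proof -
  have out: "{e \<in> Gm_edges n m. Gm_tail e = k} = Pair k ` {1..m k}"
    using assms by (auto simp: Gm_edges_def Gm_tail_def)
  have into: "{e \<in> Gm_edges n m. Gm_head n e = k} = {}"
    using assms by (auto simp: Gm_head_def)
  show ?thesis
    unfolding netflow_def out into by (simp add: sum.reindex inj_on_def)
qed

locale Gm_coordinates =
  fixes n :: nat and m :: "nat \<Rightarrow> nat" and h :: "nat \<Rightarrow> nat \<times> nat"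
  assumes m_pos: "\<forall>i\<in>{1..n}. 0 < m i"
    and bij_h: "bij_betw h {..<card (Gm_free_edges n m)} (Gm_free_edges n m)"
begin

abbreviation "d \<equiv> card (Gm_free_edges n m)"
abbreviation "E \<equiv> Gm_edges n m"
abbreviation "V \<equiv> flow_dir (Gm_edges n m) Gm_tail (Gm_head n) n"

definition coords :: "(nat \<times> nat \<Rightarrow> real) \<Rightarrow> (nat \<Rightarrow> real)" where
  "coords f = restrict (\<lambda>l. f (h l)) {..<d}"

text \<open>\<open>flow_coeff e e'\<close> is the flow on \<open>e\<close> of the basis vector of \<open>V\<close> belonging to the free edge
  \<open>e'\<close>: one unit on \<open>e'\<close> and minus one unit on \<open>(fst e', 1)\<close>.\<close>
definition flow_coeff :: "nat \<times> nat \<Rightarrow> nat \<times> nat \<Rightarrow> real" where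
  "flow_coeff e e' = (if 2 \<le> snd e then of_bool (e' = e) else - of_bool (fst e' = fst e))"

definition flow_of :: "(nat \<Rightarrow> real) \<Rightarrow> (nat \<times> nat \<Rightarrow> real)" where
  "flow_of y = restrict (\<lambda>e. \<Sum>l<d. flow_coeff e (h l) * y l) E"

definition block :: "nat \<Rightarrow> nat set" where
  "block i = {l\<in>{..<d}. fst (h l) = i}"

lemma mem_Gm_free_edges: "(i, j) \<in> Gm_free_edges n m \<longleftrightarrow> i \<in> {1..n} \<and> 2 \<le> j \<and> j \<le> m i"
  by (simp add: Gm_free_edges_def)

lemma h_free: "l < d \<Longrightarrow> h l \<in> Gm_free_edges n m"
  using bij_h by (auto simp: bij_betw_def)

lemma h_edge: "l < d \<Longrightarrow> h l \<in> E"
  using h_free Gm_free_edges_subset by blast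

lemma h_fst: "l < d \<Longrightarrow> fst (h l) \<in> {1..n}"
  using h_free[of l] by (cases "h l") (simp add: mem_Gm_free_edges)

lemma h_snd: "l < d \<Longrightarrow> 2 \<le> snd (h l)"
  using h_free[of l] by (cases "h l") (simp add: mem_Gm_free_edges)

lemma free_edge_eq_h:
  assumes "e \<in> Gm_free_edges n m"
  obtains l where "l < d" "h l = e"
  using assms bij_h by (metis bij_betw_def imageE lessThan_iff)

lemma free_edgeI: "e \<in> E \<Longrightarrow> 2 \<le> snd e \<Longrightarrow> e \<in> Gm_free_edges n m"
  by (cases e) (auto simp: Gm_edges_def mem_Gm_free_edges)

lemma first_edge_mem: "i \<in> {1..n} \<Longrightarrow> (i, 1) \<in> E"
  using m_pos by (auto simp: Gm_edges_def Suc_le_eq)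

lemma sum_edges_split:
  assumes "i \<in> {1..n}"
  shows "(\<Sum>j=1..m i. g j) = g 1 + (\<Sum>j=2..m i. g j)"
proof -
  have "1 \<le> m i" using m_pos assms by (simp add: Suc_le_eq)
  then show ?thesis by (simp add: sum.atLeast_Suc_atMost numeral_2_eq_2)
qed

lemma image_h_block: "h ` block i = {e \<in> Gm_free_edges n m. fst e = i}"
proof (intro equalityI subsetI)
  fix e assume "e \<in> h ` block i"
  then show "e \<in> {e \<in> Gm_free_edges n m. fst e = i}" using h_free by (auto simp: block_def)
next
  fix e assume e: "e \<in> {e \<in> Gm_free_edges n m. fst e = i}"
  then obtain l where "l < d" "h l = e" by (auto elim: free_edge_eq_h)
  with e show "e \<in> h ` block i" by (auto simp: block_def)
qed

lemma sum_block:
  assumes "i \<in> {1..n}"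
  shows "(\<Sum>l\<in>block i. g (h l)) = (\<Sum>j=2..m i. g (i, j))"
proof -
  have "inj_on h (block i)"
    using bij_h by (auto simp: bij_betw_def block_def intro: inj_on_subset)
  then have "(\<Sum>l\<in>block i. g (h l)) = (\<Sum>e\<in>h ` block i. g e)"
    by (simp add: sum.reindex comp_def)
  also have "h ` block i = Pair i ` {2..m i}"
    using assms by (auto simp: image_h_block mem_Gm_free_edges)
  finally show ?thesis by (simp add: sum.reindex inj_on_def)
qed

lemma card_block: "i \<in> {1..n} \<Longrightarrow> card (block i) = m i - 1"
  using sum_block[of i "\<lambda>_. 1::nat"] by simp

lemma UN_block: "(\<Union>i\<in>{1..n}. block i) = {..<d}"
  using h_fst by (auto simp: block_def)

lemma disjoint_family_on_block: "disjoint_family_on block {1..n}"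
  by (auto simp: disjoint_family_on_def block_def)

lemma flow_of_h:
  assumes "l < d"
  shows "flow_of y (h l) = y l"
proof -
  have "h l' = h l \<longleftrightarrow> l' = l" if "l' < d" for l'
    using bij_h assms that by (auto simp: bij_betw_def inj_on_def)
  then have "flow_of y (h l) = (\<Sum>l'<d. if l' = l then y l' else 0)"
    using assms h_edge h_snd by (auto simp: flow_of_def flow_coeff_def intro!: sum.cong)
  with assms show ?thesis by simp
qed

lemma flow_of_first:
  assumes "e \<in> E" "snd e < 2"
  shows "flow_of y e = - (\<Sum>l\<in>block (fst e). y l)"
proof -
  have "flow_of y e = (\<Sum>l<d. if fst (h l) = fst e then - y l else 0)"
    using assms by (auto simp: flow_of_def flow_coeff_def intro!: sum.cong)
  also have "\<dots> = - (\<Sum>l\<in>block (fst e). y l)"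
    by (simp add: block_def sum.inter_filter[symmetric] sum_negf)
  finally show ?thesis .
qed

lemma coords_flow_of: "y \<in> space (lborel_pi d) \<Longrightarrow> coords (flow_of y) = y"
  by (auto simp: coords_def flow_of_h space_lborel_pi fun_eq_iff PiE_def extensional_def)

lemma coords_in_space: "coords f \<in> space (lborel_pi d)"
  by (simp add: coords_def space_lborel_pi)

lemma sum_coords_block: "(\<Sum>l\<in>block i. coords f l) = (\<Sum>l\<in>block i. f (h l))"
  by (intro sum.cong) (auto simp: coords_def block_def)

lemma conservation_flow_of:
  assumes "k \<in> {1..n}"
  shows "(\<Sum>j=1..m k. flow_of y (k, j)) = 0"
proof -
  have "(\<Sum>j=2..m k. flow_of y (k, j)) = (\<Sum>l\<in>block k. y l)"
    using sum_block[OF assms, of "flow_of y"] by (simp add: block_def flow_of_h)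
  then show ?thesis
    using sum_edges_split[OF assms, of "\<lambda>j. flow_of y (k, j)"]
      flow_of_first[OF first_edge_mem[OF assms]] by simp
qed

lemma flow_of_in_flow_dir: "flow_of y \<in> V"
  unfolding flow_dir_def
proof (intro CollectI conjI ballI)
  show "flow_of y \<in> extensional E" by (simp add: flow_of_def)
  fix k assume k: "k \<in> {1..n}"
  show "netflow E Gm_tail (Gm_head n) (flow_of y) k = 0"
    by (simp only: netflow_Gm[OF k] conservation_flow_of[OF k])
qed

lemma flow_eq_flow_of_coords:
  assumes "\<And>k. k \<in> {1..n} \<Longrightarrow> (\<Sum>j=1..m k. f (k, j)) = c k" and "e \<in> E"
  shows "f e = flow_of (coords f) e + (if snd e = 1 then c (fst e) else 0)"
proof (cases "2 \<le> snd e")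
  case True
  with assms(2) obtain l where "l < d" "h l = e" by (blast elim: free_edge_eq_h[OF free_edgeI])
  with True show ?thesis by (auto simp: flow_of_h coords_def)
next
  case False
  with assms(2) obtain i where i: "i \<in> {1..n}" and e: "e = (i, 1)"
    by (auto simp: Gm_edges_def)
  have "f (i, 1) = c i - (\<Sum>l\<in>block i. f (h l))"
    using assms(1)[OF i] sum_edges_split[OF i, of "\<lambda>j. f (i, j)"] sum_block[OF i, of f] by simp
  with e assms(2) show ?thesis by (simp add: flow_of_first sum_coords_block)
qed

lemma flow_of_coords:
  assumes "f \<in> V"
  shows "flow_of (coords f) = f"
proof (rule extensionalityI[of _ E])
  show "flow_of (coords f) \<in> extensional E" by (simp add: flow_of_def)
  show "f \<in> extensional E" using assms by (simp add: flow_dir_def)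
  have "(\<Sum>j=1..m k. f (k, j)) = 0" if "k \<in> {1..n}" for k
    using assms netflow_Gm[OF that, where m=m and f=f] that by (simp add: flow_dir_def)
  then show "flow_of (coords f) e = f e" if "e \<in> E" for e
    using flow_eq_flow_of_coords[of f "\<lambda>_. 0" e] that by simp
qed

lemma bij_betw_flow_of: "bij_betw flow_of (space (lborel_pi d)) V"
  by (rule bij_betw_byWitness[where f'=coords])
    (auto simp: coords_flow_of flow_of_coords flow_of_in_flow_dir coords_in_space)

lemma flow_of_int_points: "flow_of ` int_points d = {f\<in>V. \<forall>e\<in>E. f e \<in> \<int>}"
proof (intro equalityI subsetI)
  fix f assume "f \<in> flow_of ` int_points d"
  then show "f \<in> {f\<in>V. \<forall>e\<in>E. f e \<in> \<int>}"
    using flow_of_in_flow_dir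
    by (auto simp: flow_of_def int_points_def flow_coeff_def PiE_iff intro!: Ints_sum Ints_mult)
next
  fix f assume f: "f \<in> {f\<in>V. \<forall>e\<in>E. f e \<in> \<int>}"
  then have "coords f \<in> int_points d" using h_edge by (auto simp: coords_def int_points_def)
  moreover have "flow_of (coords f) = f" using f flow_of_coords by auto
  ultimately show "f \<in> flow_of ` int_points d" by (metis image_eqI)
qed

lemma mat_map_coords:
  "mat_map d (\<lambda>l e. of_bool (e = h l)) E f = coords f"
proof -
  have "(\<Sum>e\<in>E. of_bool (e = h l) * f e) = f (h l)" if "l < d" for l
  proof -
    have "(\<Sum>e\<in>E. of_bool (e = h l) * f e) = (\<Sum>e\<in>E. if e = h l then f e else 0)"
      by (intro sum.cong) auto
    with h_edge[OF that] finite_Gm_edges show ?thesis by simp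
  qed
  then show ?thesis by (auto simp: mat_map_def coords_def)
qed

lemma ex_lattice_chart: "\<exists>M. lattice_chart d M E V"
proof -
  have "bij_betw coords V (space (lborel_pi d))"
    by (rule bij_betw_byWitness[where f'=flow_of])
      (auto simp: flow_of_coords coords_flow_of flow_of_in_flow_dir coords_in_space)
  moreover have "coords ` {f \<in> V. \<forall>e\<in>E. f e \<in> \<int>} = int_points d"
  proof -
    have "coords ` {f \<in> V. \<forall>e\<in>E. f e \<in> \<int>} = (\<lambda>y. coords (flow_of y)) ` int_points d"
      by (simp only: flow_of_int_points[symmetric] image_image)
    also have "\<dots> = (\<lambda>y. y) ` int_points d"
      by (rule image_cong[OF refl]) (use coords_flow_of int_points_subset_space in blast)
    finally show ?thesis by simp
  qed
  ultimately have "lattice_chart d (\<lambda>l e. of_bool (e = h l)) E V"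
    unfolding lattice_chart_def mat_map_coords by (simp add: space_lborel_pi int_points_def)
  then show ?thesis by blast
qed

definition base_flow :: "(nat \<Rightarrow> nat) \<Rightarrow> (nat \<times> nat \<Rightarrow> real)" where
  "base_flow a = restrict (\<lambda>e. if snd e = 1 then real (a (fst e)) else 0) E"

abbreviation polytope :: "(nat \<Rightarrow> nat) \<Rightarrow> (nat \<times> nat \<Rightarrow> real) set" where
  "polytope a \<equiv> flow_polytope E Gm_tail (Gm_head n) n (\<lambda>k. real (a k))"

abbreviation simplices :: "(nat \<Rightarrow> nat) \<Rightarrow> (nat \<Rightarrow> real) set" where
  "simplices a \<equiv> simplex_product {1..n} block (\<lambda>i. real (a i)) \<inter> space (lborel_pi d)"

lemma conservation_polytope:
  assumes "f \<in> polytope a" "k \<in> {1..n}"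
  shows "(\<Sum>j=1..m k. f (k, j)) = real (a k)"
  using assms netflow_Gm[OF assms(2), where m=m and f=f] by (simp add: flow_polytope_def)

lemma sum_base_flow:
  assumes "k \<in> {1..n}"
  shows "(\<Sum>j=1..m k. base_flow a (k, j)) = real (a k)"
proof -
  have "(\<Sum>j=2..m k. base_flow a (k, j)) = 0"
    using assms by (auto simp: base_flow_def Gm_edges_def intro!: sum.neutral)
  then show ?thesis
    using sum_edges_split[OF assms, of "\<lambda>j. base_flow a (k, j)"] first_edge_mem[OF assms]
    by (simp add: base_flow_def)
qed

lemma polytope_eq_flow_of_coords:
  assumes "f \<in> polytope a"
  shows "f = restrict (\<lambda>e. flow_of (coords f) e + base_flow a e) E"
proof (rule extensionalityI[of _ E])
  show "f \<in> extensional E" using assms by (simp add: flow_polytope_def)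
  fix e assume "e \<in> E"
  with assms show "f e = restrict (\<lambda>e. flow_of (coords f) e + base_flow a e) E e"
    using flow_eq_flow_of_coords[OF conservation_polytope[OF assms]] by (simp add: base_flow_def)
qed simp

lemma coords_polytope_subset: "coords ` polytope a \<subseteq> simplices a"
proof
  fix y assume "y \<in> coords ` polytope a"
  then obtain f where f: "f \<in> polytope a" and y: "y = coords f" by blast
  have nonneg: "0 \<le> f e" if "e \<in> E" for e
    using f that by (simp add: flow_polytope_def)
  have "(\<Sum>l\<in>block i. y l) \<le> real (a i)" if i: "i \<in> {1..n}" for i
  proof -
    have "(\<Sum>l\<in>block i. y l) = real (a i) - f (i, 1)"
      using conservation_polytope[OF f i] sum_edges_split[OF i, of "\<lambda>j. f (i, j)"] sum_block[OF i, of f]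
      by (simp add: y sum_coords_block)
    with nonneg[OF first_edge_mem[OF i]] show ?thesis by simp
  qed
  moreover have "0 \<le> y l" if "l \<in> block i" for i l
    using that nonneg h_edge by (simp add: y coords_def block_def)
  ultimately show "y \<in> simplices a"
    by (auto simp: simplex_product_def y coords_in_space)
qed

lemma flow_of_simplices_mem_polytope:
  assumes y: "y \<in> simplices a"
  shows "restrict (\<lambda>e. flow_of y e + base_flow a e) E \<in> polytope a"
proof -
  let ?f = "restrict (\<lambda>e. flow_of y e + base_flow a e) E"
  have "0 \<le> ?f e" if e: "e \<in> E" for e
  proof (cases "2 \<le> snd e")
    case True
    with e obtain l where l: "l < d" "h l = e" by (blast elim: free_edge_eq_h[OF free_edgeI])
    then have "l \<in> block (fst e)" by (simp add: block_def)
    then have "0 \<le> y l" using y h_fst[OF l(1)] l(2) by (auto simp: simplex_product_def)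
    with e True show ?thesis using flow_of_h[OF l(1), of y] by (simp add: base_flow_def l(2))
  next
    case False
    with e obtain i where i: "i \<in> {1..n}" and ei: "e = (i, 1)" by (auto simp: Gm_edges_def)
    have "(\<Sum>l\<in>block i. y l) \<le> real (a i)" using y i by (auto simp: simplex_product_def)
    then show ?thesis
      using flow_of_first[OF first_edge_mem[OF i], of y] first_edge_mem[OF i]
      by (simp add: ei base_flow_def)
  qed
  moreover have "netflow E Gm_tail (Gm_head n) ?f k = real (a k)" if k: "k \<in> {1..n}" for k
  proof -
    have "(\<Sum>j=1..m k. ?f (k, j)) = (\<Sum>j=1..m k. flow_of y (k, j) + base_flow a (k, j))"
      using k by (intro sum.cong) (auto simp: Gm_edges_def)
    also have "\<dots> = (\<Sum>j=1..m k. flow_of y (k, j)) + (\<Sum>j=1..m k. base_flow a (k, j))"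
      by (rule sum.distrib)
    also have "\<dots> = real (a k)"
      by (simp only: conservation_flow_of[OF k] sum_base_flow[OF k] add_0)
    finally show ?thesis by (simp only: netflow_Gm[OF k])
  qed
  ultimately show ?thesis by (simp add: flow_polytope_def)
qed

lemma coords_polytope: "coords ` polytope a = simplices a"
proof
  show "simplices a \<subseteq> coords ` polytope a"
  proof
    fix y assume y: "y \<in> simplices a"
    have "coords (restrict (\<lambda>e. flow_of y e + base_flow a e) E) = coords (flow_of y)"
      unfolding coords_def by (intro restrict_ext) (auto simp: h_edge base_flow_def dest: h_snd)
    also have "\<dots> = y" using y by (simp add: coords_flow_of)
    finally show "y \<in> coords ` polytope a"
      by (rule image_eqI[OF sym flow_of_simplices_mem_polytope[OF y]])
  qed
qed (rule coords_polytope_subset)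

lemma emeasure_simplices:
  "emeasure (lborel_pi d) (simplices a) = ennreal (\<Prod>i=1..n. real (a i) ^ (m i - 1) / fact (m i - 1))"
proof -
  have "emeasure (PiM (\<Union>(block ` {1..n})) (\<lambda>_. lborel))
      (simplex_product {1..n} block (\<lambda>i. real (a i)) \<inter> space (PiM (\<Union>(block ` {1..n})) (\<lambda>_. lborel)))
    = ennreal (\<Prod>i\<in>{1..n}. real (a i) ^ card (block i) / fact (card (block i)))"
    by (rule emeasure_simplex_product[OF _ disjoint_family_on_block]) (auto simp: block_def)
  also have "\<dots> = ennreal (\<Prod>i=1..n. real (a i) ^ (m i - 1) / fact (m i - 1))"
    by (intro arg_cong[where f=ennreal] prod.cong refl) (simp add: card_block)
  finally show ?thesis by (simp only: UN_block)
qed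

definition chart_matrix :: "(nat \<Rightarrow> nat \<times> nat \<Rightarrow> real) \<Rightarrow> nat \<Rightarrow> nat \<Rightarrow> real" where
  "chart_matrix M j l = (\<Sum>e\<in>E. M j e * flow_coeff e (h l))"

lemma mat_map_flow_of: "mat_map d M E (flow_of y) = lin_map d (chart_matrix M) y"
proof -
  have "(\<Sum>e\<in>E. M j e * flow_of y e) = (\<Sum>l<d. chart_matrix M j l * y l)" for j
  proof -
    have "(\<Sum>e\<in>E. M j e * flow_of y e) = (\<Sum>e\<in>E. \<Sum>l<d. M j e * flow_coeff e (h l) * y l)"
      by (intro sum.cong refl) (simp add: flow_of_def sum_distrib_left mult.assoc)
    also have "\<dots> = (\<Sum>l<d. \<Sum>e\<in>E. M j e * flow_coeff e (h l) * y l)"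
      by (rule sum.swap)
    also have "\<dots> = (\<Sum>l<d. chart_matrix M j l * y l)"
      by (simp add: chart_matrix_def sum_distrib_right)
    finally show ?thesis .
  qed
  then show ?thesis by (simp add: mat_map_def lin_map_def)
qed

lemma unimodular_chart_matrix:
  assumes "lattice_chart d M E V"
  shows "bij_betw (lin_map d (chart_matrix M)) (space (lborel_pi d)) (space (lborel_pi d))"
    and "lin_map d (chart_matrix M) ` int_points d = int_points d"
proof -
  have "lin_map d (chart_matrix M) = mat_map d M E \<circ> flow_of"
    by (simp add: fun_eq_iff mat_map_flow_of)
  moreover have "bij_betw (mat_map d M E) V (space (lborel_pi d))"
    using assms by (simp add: lattice_chart_def space_lborel_pi)
  ultimately show "bij_betw (lin_map d (chart_matrix M)) (space (lborel_pi d)) (space (lborel_pi d))"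
    using bij_betw_trans[OF bij_betw_flow_of] by simp
  have "lin_map d (chart_matrix M) ` int_points d = mat_map d M E ` flow_of ` int_points d"
    by (simp add: image_image mat_map_flow_of)
  also have "\<dots> = int_points d"
    unfolding flow_of_int_points using assms by (simp add: lattice_chart_def int_points_def)
  finally show "lin_map d (chart_matrix M) ` int_points d = int_points d" .
qed

lemma mat_map_chart_polytope:
  "mat_map d M E ` polytope a =
     shift d (mat_map d M E (base_flow a)) ` lin_map d (chart_matrix M) ` simplices a"
proof -
  have "mat_map d M E f = shift d (mat_map d M E (base_flow a)) (lin_map d (chart_matrix M) (coords f))"
    if "f \<in> polytope a" for f
  proof -
    have "mat_map d M E f = mat_map d M E (restrict (\<lambda>e. flow_of (coords f) e + base_flow a e) E)"
      by (rule arg_cong[OF polytope_eq_flow_of_coords[OF that]])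
    then show ?thesis by (simp add: mat_map_restrict_add mat_map_flow_of)
  qed
  then have "mat_map d M E ` polytope a =
      (\<lambda>f. shift d (mat_map d M E (base_flow a)) (lin_map d (chart_matrix M) (coords f))) ` polytope a"
    by (rule image_cong[OF refl])
  then have "mat_map d M E ` polytope a =
      shift d (mat_map d M E (base_flow a)) ` lin_map d (chart_matrix M) ` coords ` polytope a"
    by (simp only: image_image)
  then show ?thesis by (simp only: coords_polytope)
qed

lemma emeasure_mat_map_chart_polytope:
  assumes "lattice_chart d M E V"
  shows "emeasure (lborel_pi d) (mat_map d M E ` polytope a) =
    ennreal (\<Prod>i=1..n. real (a i) ^ (m i - 1) / fact (m i - 1))"
proof -
  have sets: "simplices a \<in> sets (lborel_pi d)"
    by (rule simplex_product_in_sets) (auto simp: block_def)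
  note unimodular = emeasure_unimodular_image[OF unimodular_chart_matrix[OF assms] sets]
  have "emeasure (lborel_pi d) (mat_map d M E ` polytope a) =
      emeasure (lborel_pi d) (lin_map d (chart_matrix M) ` simplices a)"
    unfolding mat_map_chart_polytope by (rule emeasure_shift_image[OF unimodular(1)])
  also have "\<dots> = emeasure (lborel_pi d) (simplices a)"
    by (rule unimodular(2))
  finally show ?thesis by (simp only: emeasure_simplices)
qed

end

theorem lemma3p8:
  fixes n :: nat and m a :: "nat \<Rightarrow> nat"
  assumes "\<forall>i\<in>{1..n}. 0 < m i"
  shows "rel_norm_volume (card (Gm_edges n m) - n) (Gm_edges n m)
           (flow_dir (Gm_edges n m) Gm_tail (Gm_head n) n)
           (flow_polytope (Gm_edges n m) Gm_tail (Gm_head n) n (\<lambda>k. real (a k)))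
         = multinomial n (\<lambda>i. m i - 1) * (\<Prod>i=1..n. real (a i) ^ (m i - 1))"
proof -
  obtain h where "bij_betw h {..<card (Gm_free_edges n m)} (Gm_free_edges n m)"
    using ex_bij_betw_nat_finite[OF finite_Gm_free_edges] by (auto simp: atLeast0LessThan)
  then interpret Gm_coordinates n m h by (rule Gm_coordinates.intro[OF assms])
  let ?M = "SOME M. lattice_chart d M E V"
  have chart: "lattice_chart d ?M E V"
    using ex_lattice_chart by (rule someI_ex)
  have "rel_norm_volume d E V (polytope a) = fact d * measure (lborel_pi d) (mat_map d ?M E ` polytope a)"
    by (simp add: rel_norm_volume_def)
  also have "\<dots> = fact d * (\<Prod>i=1..n. real (a i) ^ (m i - 1) / fact (m i - 1))"
    using prod_nonneg[of "{1..n}" "\<lambda>i. real (a i) ^ (m i - 1) / fact (m i - 1)"]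
    by (simp add: measure_def emeasure_mat_map_chart_polytope[OF chart])
  also have "\<dots> = multinomial n (\<lambda>i. m i - 1) * (\<Prod>i=1..n. real (a i) ^ (m i - 1))"
    by (simp add: multinomial_def card_Gm_free_edges prod_dividef)
  finally show ?thesis by (simp add: card_Gm_edges_minus[OF assms])
qed

end
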